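(* Let $f_0,g_0\in\mathbb{C}[z]$ be polynomials of length $\ell$ with nonzero constant coefficients, let $t$ be an element of the group $G_{\ell,\ell}=\langle s,n,h,r\rangle$ of permutations of $P_\ell\times P_\ell$, and let $(a_0,b_0)=t(f_0,g_0)$. Let $\sigma_0,\sigma_1,\ldots$ be a sequence in $\{-1,1\}$, and for $q\in\{f,g,a,b\}$ define $q_{m+1}(z)=q_m(z)+\sigma_m z^{\operatorname{len} q_m}q_m^\dagger(-z)$ for all $m\ge0$. Then \[ \lim_{m\to\infty}\mathrm{CDF}(a_m,b_m)=\lim_{m\to\infty}\mathrm{CDF}(f_m,g_m)\quad\text{and}\quad\lim_{m\to\infty}\mathrm{PSC}(a_m,b_m)=\lim_{m\to\infty}\mathrm{PSC}(f_m,g_m). \]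
   Context: For a polynomial $a(z)=a_0+\cdots+a_dz^d$ of degree $d$, $\operatorname{len}a=1+d$ and $a^\dagger(z)=\overline{a_d}+\overline{a_{d-1}}z+\cdots+\overline{a_0}z^d$; $q^\dagger(-z)$ means $q^\dagger$ evaluated at $-z$; $\widetilde{a}(z)=a(-z)$. $P_\ell$ is the set of polynomials of length $\ell$ in $\mathbb{C}[z]$ with nonzero constant coefficient, and $G_{\ell,\ell}$ is the group of permutations of $P_\ell\times P_\ell$ generated by $s(f,g)=(g,f)$, $n(f,g)=(-f,g)$, $h(f,g)=(\widetilde{f},\widetilde{g})$, $r(f,g)=(f^\dagger,g^\dagger)$. Polynomials are identified with coefficient sequences. For sequences $f,g$ of equal length, $C_{f,g}(s)=\sum_jf_{j+s}\overline{g_j}$; $\mathrm{CDF}(f,g)=\sum_s|C_{f,g}(s)|^2/(|C_{f,f}(0)||C_{g,g}(0)|)$ (equal to $\|fg\|_2^2/(\|f\|_2^2\|g\|_2^2)$ with $\|a\|_2^2=\frac{1}{2\pi}\int_0^{2\pi}|a(e^{i\theta})|^2d\theta$); $\mathrm{ADF}(f)=\mathrm{CDF}(f,f)-1$; and $\mathrm{PSC}(f,g)=\sqrt{\mathrm{ADF}(f)\mathrm{ADF}(g)}+\mathrm{CDF}(f,g)$. *)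

theory Defs
  imports "HOL-Computational_Algebra.Polynomial" Complex_Main
begin

definition len :: "complex poly \<Rightarrow> nat" where
  "len a = degree a + 1"

definition dagger :: "complex poly \<Rightarrow> complex poly" where
  "dagger a = map_poly cnj (reflect_poly a)"

definition negz :: "complex poly \<Rightarrow> complex poly" where
  "negz a = pcompose a [:0, -1:]"

definition Pl :: "nat \<Rightarrow> complex poly set" where
  "Pl l = {p. len p = l \<and> coeff p 0 \<noteq> 0}"

definition gs :: "complex poly \<times> complex poly \<Rightarrow> complex poly \<times> complex poly" where
  "gs x = (snd x, fst x)"
definition gn :: "complex poly \<times> complex poly \<Rightarrow> complex poly \<times> complex poly" where
  "gn x = (- fst x, snd x)"
definition gh :: "complex poly \<times> complex poly \<Rightarrow> complex poly \<times> complex poly" where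
  "gh x = (negz (fst x), negz (snd x))"
definition gr :: "complex poly \<times> complex poly \<Rightarrow> complex poly \<times> complex poly" where
  "gr x = (dagger (fst x), dagger (snd x))"

text \<open>The group generated by s, n, h, r (all generators are involutions on
  P_l x P_l, so the generated group equals the generated monoid).\<close>
inductive_set Gll :: "(complex poly \<times> complex poly \<Rightarrow> complex poly \<times> complex poly) set" where
  Gll_id: "id \<in> Gll"
| Gll_s: "t \<in> Gll \<Longrightarrow> gs \<circ> t \<in> Gll"
| Gll_n: "t \<in> Gll \<Longrightarrow> gn \<circ> t \<in> Gll"
| Gll_h: "t \<in> Gll \<Longrightarrow> gh \<circ> t \<in> Gll"
| Gll_r: "t \<in> Gll \<Longrightarrow> gr \<circ> t \<in> Gll"

definition step :: "int \<Rightarrow> complex poly \<Rightarrow> complex poly" where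
  "step \<sigma> q = q + smult (of_int \<sigma>) (monom 1 (len q) * negz (dagger q))"

definition cf :: "complex poly \<Rightarrow> int \<Rightarrow> complex" where
  "cf f k = (if k < 0 then 0 else coeff f (nat k))"

definition Ccorr :: "complex poly \<Rightarrow> complex poly \<Rightarrow> int \<Rightarrow> complex" where
  "Ccorr f g s = (\<Sum>j<len g. cf f (int j + s) * cnj (coeff g j))"

text \<open>Sum over all shifts s (terms vanish outside the given range).\<close>
definition CDF :: "complex poly \<Rightarrow> complex poly \<Rightarrow> real" where
  "CDF f g = (\<Sum>s\<in>{- int (len f + len g) .. int (len f + len g)}. (cmod (Ccorr f g s))\<^sup>2)
              / (cmod (Ccorr f f 0) * cmod (Ccorr g g 0))"

definition ADF :: "complex poly \<Rightarrow> real" where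
  "ADF f = CDF f f - 1"

definition PSC :: "complex poly \<Rightarrow> complex poly \<Rightarrow> real" where
  "PSC f g = sqrt (ADF f * ADF g) + CDF f g"

end

theory Submission
  imports Defs
begin

text \<open>On the unit circle, with d the common degree of f and g, a step sends q(z) to
  q(z) + e w conj(q(-z)) where e = sigma (-1)^d and w = z^(2d+1).  Averages over the K-th roots
  of unity compute L2 inner products of polynomials of degree below K exactly, and expanding the
  squares shows that N = |f g|^2, M = |f g~|^2 and R = Re <g g~, f f~> (with g~(z) = g(-z)) evolve
  by a linear map with eigenvalues 4, 4, -2, while |f|^2 and |g|^2 double.  Hence
  CDF(f_m, g_m) = N_m / (4^m |f_0|^2 |g_0|^2) tends to (2 N_0 + M_0 + R_0) / (3 |f_0|^2 |g_0|^2).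
  This value is unchanged by s, n, h and r, and the limit of PSC is built from such values.\<close>

section \<open>Means over roots of unity and L2 inner products\<close>

definition root_mean :: "nat \<Rightarrow> (complex \<Rightarrow> complex) \<Rightarrow> complex" where
  "root_mean K \<phi> = (\<Sum>z | z ^ K = 1. \<phi> z) / of_nat K"

definition pinner :: "complex poly \<Rightarrow> complex poly \<Rightarrow> complex" where
  "pinner p q = (\<Sum>i\<le>max (degree p) (degree q). coeff p i * cnj (coeff q i))"

definition sqnorm :: "complex poly \<Rightarrow> real" where
  "sqnorm p = Re (pinner p p)"

lemma unit_power_mult_cnj: "cmod z = 1 \<Longrightarrow> z ^ n * cnj z ^ n = 1"
  using complex_norm_square[of "z ^ n"] by (simp add: norm_power)

lemma root_unity_norm: "z ^ K = (1::complex) \<Longrightarrow> K > 0 \<Longrightarrow> cmod z = 1"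
  using power_eq_1_iff by blast

lemma root_mean_cong:
  assumes "K > 0" "\<And>z. cmod z = 1 \<Longrightarrow> \<phi> z = \<psi> z"
  shows "root_mean K \<phi> = root_mean K \<psi>"
  unfolding root_mean_def using assms root_unity_norm by (intro arg_cong2[where f="(/)"] sum.cong) auto

lemma root_mean_add: "root_mean K (\<lambda>z. \<phi> z + \<psi> z) = root_mean K \<phi> + root_mean K \<psi>"
  unfolding root_mean_def by (simp add: sum.distrib add_divide_distrib)

lemma root_mean_diff: "root_mean K (\<lambda>z. \<phi> z - \<psi> z) = root_mean K \<phi> - root_mean K \<psi>"
  unfolding root_mean_def by (simp add: sum_subtractf diff_divide_distrib)

lemma root_mean_uminus: "root_mean K (\<lambda>z. - \<phi> z) = - root_mean K \<phi>"
  unfolding root_mean_def by (simp add: sum_negf)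

lemma root_mean_cnj: "root_mean K (\<lambda>z. cnj (\<phi> z)) = cnj (root_mean K \<phi>)"
  unfolding root_mean_def by simp

lemma root_mean_sum:
  "finite A \<Longrightarrow> root_mean K (\<lambda>z. \<Sum>i\<in>A. \<phi> i z) = (\<Sum>i\<in>A. root_mean K (\<phi> i))"
  unfolding root_mean_def by (simp add: sum.swap[of _ _ A] sum_divide_distrib)

lemma root_mean_cmult: "root_mean K (\<lambda>z. c * \<phi> z) = c * root_mean K \<phi>"
  unfolding root_mean_def by (simp add: sum_distrib_left)

lemma root_mean_reflect:
  assumes "even K"
  shows "root_mean K (\<lambda>z. \<phi> (- z)) = root_mean K \<phi>"
proof -
  have "(\<Sum>z | z ^ K = 1. \<phi> (- z)) = (\<Sum>z | z ^ K = (1::complex). \<phi> z)"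
    by (rule sum.reindex_bij_witness[where i=uminus and j=uminus]) (use assms in auto)
  thus ?thesis unfolding root_mean_def by simp
qed

lemma root_mean_odd:
  assumes "even K" "\<And>z. \<phi> (- z) = - \<phi> z"
  shows "root_mean K \<phi> = 0"
proof -
  have "root_mean K \<phi> = - root_mean K \<phi>"
    using root_mean_reflect[OF assms(1), of \<phi>] by (simp add: assms(2) root_mean_uminus)
  thus ?thesis by simp
qed

lemma Re_root_mean_eq_0:
  assumes "K > 0" "\<And>z. cmod z = 1 \<Longrightarrow> Re (\<phi> z) = 0"
  shows "Re (root_mean K \<phi>) = 0"
proof -
  have "Re (\<Sum>z | z ^ K = 1. \<phi> z) = 0"
    unfolding Re_sum using assms root_unity_norm by (intro sum.neutral) auto
  thus ?thesis unfolding root_mean_def by simp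
qed

lemma sum_roots_unity_power:
  assumes "0 < d" "d < K"
  shows "(\<Sum>z | z ^ K = (1::complex). z ^ d) = 0"
proof -
  have K: "K > 0" using assms by simp
  define \<omega> where "\<omega> = cis (2 * pi * real d / real K)"
  have "(\<Sum>z | z ^ K = (1::complex). z ^ d) = (\<Sum>k<K. cis (2 * pi * real k / real K) ^ d)"
    using K by (intro sum.reindex_bij_betw [symmetric] bij_betw_roots_unity) auto
  also have "\<dots> = (\<Sum>k<K. \<omega> ^ k)"
    by (intro sum.cong refl) (auto simp: \<omega>_def DeMoivre mult_ac)
  also have "\<omega> \<noteq> 1"
  proof
    assume "\<omega> = 1"
    hence "cis (2 * pi * real d / real K) = cis (2 * pi * real 0 / real K)" by (simp add: \<omega>_def)
    moreover have "inj_on (\<lambda>k. cis (2 * pi * real k / real K)) {..<K}"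
      using bij_betw_roots_unity[OF K] by (simp add: bij_betw_def)
    ultimately show False
      using assms inj_onD[of "\<lambda>k. cis (2 * pi * real k / real K)" "{..<K}" d 0] by auto
  qed
  moreover have "\<omega> ^ K = 1"
    using K by (simp add: \<omega>_def DeMoivre)
  ultimately show ?thesis by (simp add: sum_gp_strict)
qed

lemma root_mean_power:
  assumes "d < K"
  shows "root_mean K (\<lambda>z. z ^ d) = (if d = 0 then 1 else 0)"
  using assms sum_roots_unity_power[of d K] card_roots_unity_eq[of K]
  by (auto simp: root_mean_def)

lemma root_mean_monomials:
  assumes "a < K" "b < K"
  shows "root_mean K (\<lambda>z. z ^ a * cnj z ^ b) = (if a = b then 1 else 0)"
proof -
  have K: "K > 0" using assms by simp
  have ordered: "root_mean K (\<lambda>z. z ^ a * cnj z ^ b) = (if a = b then 1 else 0)"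
    if "b \<le> a" "a < K" for a b
  proof -
    have "z ^ a * cnj z ^ b = z ^ (a - b)" if "cmod z = 1" for z
    proof -
      have "z ^ a = z ^ (a - b) * z ^ b"
        using \<open>b \<le> a\<close> by (simp add: power_add[symmetric])
      thus ?thesis using unit_power_mult_cnj[OF that, of b] by (simp add: mult.assoc)
    qed
    hence "root_mean K (\<lambda>z. z ^ a * cnj z ^ b) = root_mean K (\<lambda>z. z ^ (a - b))"
      using K by (intro root_mean_cong) auto
    thus ?thesis using that root_mean_power[of "a - b" K] by auto
  qed
  show ?thesis
  proof (cases "b \<le> a")
    case False
    have "root_mean K (\<lambda>z. z ^ a * cnj z ^ b) = cnj (root_mean K (\<lambda>z. z ^ b * cnj z ^ a))"
      by (simp add: root_mean_cnj[symmetric] mult.commute)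
    thus ?thesis using ordered[of a b] False assms by simp
  qed (use ordered assms in auto)
qed

lemma root_mean_parseval:
  assumes "B \<le> K"
  shows "root_mean K (\<lambda>z. (\<Sum>i<B. c i * z ^ i) * cnj (\<Sum>j<B. d j * z ^ j)) = (\<Sum>i<B. c i * cnj (d i))"
proof -
  have "root_mean K (\<lambda>z. (\<Sum>i<B. c i * z ^ i) * cnj (\<Sum>j<B. d j * z ^ j))
      = root_mean K (\<lambda>z. \<Sum>i<B. \<Sum>j<B. (c i * cnj (d j)) * (z ^ i * cnj z ^ j))"
    by (simp add: sum_product mult_ac)
  also have "\<dots> = (\<Sum>i<B. \<Sum>j<B. (c i * cnj (d j)) * (if i = j then 1 else 0))"
    using assms by (simp add: root_mean_sum root_mean_cmult root_mean_monomials)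
  also have "\<dots> = (\<Sum>i<B. c i * cnj (d i))"
    by (simp add: if_distrib cong: if_cong)
  finally show ?thesis .
qed

lemma poly_eq_sum_lessThan:
  fixes p :: "complex poly"
  assumes "degree p < B"
  shows "poly p z = (\<Sum>i<B. coeff p i * z ^ i)"
proof -
  have "poly p z = (\<Sum>i\<le>degree p. coeff p i * z ^ i)" by (rule poly_altdef)
  also have "\<dots> = (\<Sum>i<B. coeff p i * z ^ i)"
    using assms by (intro sum.mono_neutral_left) (auto simp: coeff_eq_0)
  finally show ?thesis .
qed

lemma pinner_eq_sum_lessThan:
  assumes "degree p < B" "degree q < B"
  shows "pinner p q = (\<Sum>i<B. coeff p i * cnj (coeff q i))"
  unfolding pinner_def using assms
  by (intro sum.mono_neutral_left) (auto simp: coeff_eq_0)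

lemma pinner_eq_root_mean:
  assumes "degree p < K" "degree q < K"
  shows "pinner p q = root_mean K (\<lambda>z. poly p z * cnj (poly q z))"
  using root_mean_parseval[of K K "coeff p" "coeff q"] assms
  by (simp add: poly_eq_sum_lessThan pinner_eq_sum_lessThan)

lemma pinner_commute: "pinner q p = cnj (pinner p q)"
  unfolding pinner_def by (simp add: max.commute mult.commute)

lemma pinner_self: "pinner p p = of_real (sqnorm p)"
proof -
  have "pinner p p = of_real (\<Sum>i\<le>degree p. (cmod (coeff p i))\<^sup>2)"
    unfolding pinner_def by (simp add: complex_norm_square[symmetric])
  thus ?thesis unfolding sqnorm_def by simp
qed

lemma sqnorm_nonneg: "sqnorm p \<ge> 0"
  unfolding sqnorm_def pinner_def by (simp add: sum_nonneg)

lemma pinner_cong_on_circle: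
  assumes "\<And>z. cmod z = 1 \<Longrightarrow> poly p z * cnj (poly q z) = poly p' z * cnj (poly q' z)"
  shows "pinner p q = pinner p' q'"
proof -
  define K where "K = Suc (degree p + degree q + degree p' + degree q')"
  have "root_mean K (\<lambda>z. poly p z * cnj (poly q z)) = root_mean K (\<lambda>z. poly p' z * cnj (poly q' z))"
    using assms by (intro root_mean_cong) (auto simp: K_def)
  moreover have "pinner p q = root_mean K (\<lambda>z. poly p z * cnj (poly q z))"
    "pinner p' q' = root_mean K (\<lambda>z. poly p' z * cnj (poly q' z))"
    by (intro pinner_eq_root_mean; simp add: K_def)+
  ultimately show ?thesis by simp
qed

lemma sqnorm_cong_on_circle:
  assumes "\<And>z. cmod z = 1 \<Longrightarrow> cmod (poly p z) = cmod (poly q z)"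
  shows "sqnorm p = sqnorm q"
proof -
  have "pinner p p = pinner q q"
    using assms by (intro pinner_cong_on_circle) (simp add: complex_norm_square[symmetric])
  thus ?thesis by (simp add: sqnorm_def)
qed

section \<open>Reflections, conjugate reciprocals and the step\<close>

lemma sqnorm_uminus [simp]: "sqnorm (- p) = sqnorm p"
  by (simp add: sqnorm_def pinner_def)

lemma poly_negz [simp]: "poly (negz p) z = poly p (- z)"
  by (simp add: negz_def poly_pcompose)

lemma degree_negz [simp]: "degree (negz p) = degree p"
  by (simp add: negz_def degree_pcompose)

lemma coeff_0_negz [simp]: "coeff (negz p) 0 = coeff p 0"
  by (metis poly_negz minus_zero poly_0_coeff_0)

lemma negz_negz [simp]: "negz (negz p) = p"
  by (simp add: poly_eq_poly_eq_iff[symmetric] fun_eq_iff)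

lemma negz_mult: "negz (p * q) = negz p * negz q"
  by (simp add: poly_eq_poly_eq_iff[symmetric] fun_eq_iff)

lemma negz_uminus: "negz (- p) = - negz p"
  by (simp add: poly_eq_poly_eq_iff[symmetric] fun_eq_iff)

lemma pinner_negz: "pinner (negz p) (negz q) = pinner p q"
proof -
  define K where "K = 2 * Suc (degree p + degree q)"
  have "pinner (negz p) (negz q) = root_mean K (\<lambda>z. poly p (- z) * cnj (poly q (- z)))"
    by (subst pinner_eq_root_mean[of _ K]) (auto simp: K_def)
  also have "\<dots> = root_mean K (\<lambda>z. poly p z * cnj (poly q z))"
    by (rule root_mean_reflect) (simp add: K_def)
  also have "\<dots> = pinner p q"
    by (subst pinner_eq_root_mean[of _ K]) (auto simp: K_def)
  finally show ?thesis .
qed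

lemma sqnorm_negz [simp]: "sqnorm (negz p) = sqnorm p"
  by (simp add: sqnorm_def pinner_negz)

lemma poly_map_poly_cnj: "poly (map_poly cnj p) z = cnj (poly p (cnj z))"
  by (induct p) (auto simp: map_poly_pCons)

lemma poly_dagger_on_circle:
  assumes "cmod z = 1"
  shows "poly (dagger p) z = z ^ degree p * cnj (poly p z)"
proof -
  have "z \<noteq> 0" using assms by auto
  moreover have "inverse (cnj z) = z"
    using assms complex_norm_square[of z] by (metis inverse_unique mult.commute of_real_1 power_one)
  ultimately show ?thesis
    unfolding dagger_def poly_map_poly_cnj by (simp add: poly_reflect_poly_nz)
qed

lemma norm_poly_dagger_on_circle:
  "cmod z = 1 \<Longrightarrow> cmod (poly (dagger p) z) = cmod (poly p z)"
  by (simp only: poly_dagger_on_circle norm_mult norm_power complex_mod_cnj mult_1 power_one)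

lemma coeff_0_dagger: "coeff (dagger p) 0 = cnj (lead_coeff p)"
  unfolding dagger_def by (simp add: coeff_map_poly)

lemma degree_dagger_le: "degree (dagger p) \<le> degree p"
  unfolding dagger_def by (subst degree_map_poly) (auto simp: degree_reflect_poly_le)

lemma degree_dagger: "coeff p 0 \<noteq> 0 \<Longrightarrow> degree (dagger p) = degree p"
  unfolding dagger_def by (subst degree_map_poly) auto

lemma poly_step_on_circle:
  assumes "cmod z = 1" "degree F = d"
  shows "poly (step \<sigma> F) z = poly F z + of_int \<sigma> * (-1) ^ d * z ^ (2*d+1) * cnj (poly F (- z))"
proof -
  have "poly (step \<sigma> F) z = poly F z + of_int \<sigma> * (z ^ (d+1) * poly (dagger F) (- z))"
    using assms(2) unfolding step_def len_def by (simp add: poly_monom)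
  also have "poly (dagger F) (- z) = (- z) ^ d * cnj (poly F (- z))"
    using poly_dagger_on_circle[of "- z" F] assms by simp
  also have "(- z) ^ d = (-1) ^ d * z ^ d"
    by (rule power_minus)
  also have "z ^ (d+1) * ((-1) ^ d * z ^ d * cnj (poly F (- z)))
      = (-1) ^ d * z ^ (2*d+1) * cnj (poly F (- z))"
  proof -
    have "z ^ (d+1) * z ^ d = z ^ (2*d+1)"
      by (simp only: power_add[symmetric]) (simp add: mult_2)
    thus ?thesis by (metis mult.assoc mult.left_commute)
  qed
  finally show ?thesis by (simp add: mult_ac)
qed

lemma poly_step_on_circle_uminus:
  assumes "cmod z = 1" "degree F = d"
  shows "poly (step \<sigma> F) (- z) = poly F (- z) - of_int \<sigma> * (-1) ^ d * z ^ (2*d+1) * cnj (poly F z)"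
  using poly_step_on_circle[of "- z" F d \<sigma>] assms by simp

lemma coeff_0_step: "coeff (step \<sigma> F) 0 = coeff F 0"
  unfolding step_def len_def by (simp add: coeff_monom_mult)

lemma degree_step_le: "degree (step \<sigma> F) \<le> 2 * degree F + 1"
proof -
  have "degree (monom (1::complex) (len F) * negz (dagger F)) \<le> 2 * degree F + 1"
    using degree_mult_le[of "monom (1::complex) (len F)" "negz (dagger F)"] degree_dagger_le[of F]
    by (simp add: degree_monom_eq len_def)
  thus ?thesis unfolding step_def
    by (intro degree_add_le order_trans[OF degree_smult_le]) auto
qed

lemma degree_step:
  assumes "coeff F 0 \<noteq> 0" "\<sigma> \<in> {-1, 1}"
  shows "degree (step \<sigma> F) = 2 * degree F + 1"
proof -
  have "poly (negz (dagger F)) 0 = cnj (lead_coeff F)"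
    by (simp add: poly_0_coeff_0 coeff_0_dagger)
  hence "negz (dagger F) \<noteq> 0"
    using assms(1) by (metis poly_0 complex_cnj_zero_iff leading_coeff_0_iff coeff_0)
  moreover have "(of_int \<sigma> :: complex) \<noteq> 0" using assms(2) by auto
  ultimately have "degree (smult (of_int \<sigma>) (monom 1 (len F) * negz (dagger F))) = 2 * degree F + 1"
    using assms(1) by (simp add: degree_mult_eq degree_monom_eq degree_dagger len_def)
  thus ?thesis unfolding step_def by (subst degree_add_eq_right) auto
qed

lemma step_in_Pl: "F \<in> Pl l \<Longrightarrow> \<sigma> \<in> {-1, 1} \<Longrightarrow> step \<sigma> F \<in> Pl (2 * l)"
  using degree_step[of F \<sigma>] coeff_0_step[of \<sigma> F] by (auto simp: Pl_def len_def)

section \<open>Correlations as L2 norms\<close>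

lemma sum_shifted_coeffs:
  fixes F :: "complex poly"
  assumes "dd + degree F < B"
  shows "(\<Sum>k<B. cf F (int k - int dd) * z ^ k) = z ^ dd * poly F z"
proof -
  have "(\<Sum>k<B. cf F (int k - int dd) * z ^ k) = (\<Sum>k\<in>{dd..<B}. cf F (int k - int dd) * z ^ k)"
    by (intro sum.mono_neutral_right) (auto simp: cf_def)
  also have "\<dots> = (\<Sum>i<B-dd. cf F (int (i + dd) - int dd) * z ^ (i + dd))"
    using sum.shift_bounds_nat_ivl[of "\<lambda>k. cf F (int k - int dd) * z ^ k" 0 dd "B-dd"] assms
    by (simp add: atLeast0LessThan)
  also have "\<dots> = z ^ dd * (\<Sum>i<B-dd. coeff F i * z ^ i)"
    by (simp add: cf_def power_add sum_distrib_left mult_ac)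
  also have "(\<Sum>i<B-dd. coeff F i * z ^ i) = poly F z"
    using assms by (intro poly_eq_sum_lessThan[symmetric]) simp
  finally show ?thesis .
qed

lemma poly_mult_cnj_eq_Ccorr_sum:
  assumes z: "cmod z = 1" and n: "n = len F + len G"
  shows "z ^ n * poly F z * cnj (poly G z) = (\<Sum>k<2*n+1. Ccorr F G (int k - int n) * z ^ k)"
proof -
  have "(\<Sum>k<2*n+1. Ccorr F G (int k - int n) * z ^ k)
      = (\<Sum>k<2*n+1. \<Sum>j<len G. cnj (coeff G j) * (cf F (int k - int (n - j)) * z ^ k))"
    unfolding Ccorr_def sum_distrib_right using n
    by (intro sum.cong refl) (auto simp: of_nat_diff algebra_simps)
  also have "\<dots> = (\<Sum>j<len G. cnj (coeff G j) * (\<Sum>k<2*n+1. cf F (int k - int (n - j)) * z ^ k))"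
    unfolding sum_distrib_left by (rule sum.swap)
  also have "\<dots> = (\<Sum>j<len G. cnj (coeff G j) * (z ^ n * cnj z ^ j * poly F z))"
  proof (intro sum.cong refl)
    fix j assume "j \<in> {..<len G}"
    hence "j \<le> n" and "n - j + degree F < 2*n+1" using n by (auto simp: len_def)
    have "z ^ n * cnj z ^ j = z ^ (n - j)"
    proof -
      have "z ^ n = z ^ (n - j) * z ^ j" using \<open>j \<le> n\<close> by (simp flip: power_add)
      thus ?thesis using unit_power_mult_cnj[OF z, of j] by (simp add: mult.assoc)
    qed
    moreover have "(\<Sum>k<2*n+1. cf F (int k - int (n - j)) * z ^ k) = z ^ (n - j) * poly F z"
      using \<open>n - j + degree F < 2*n+1\<close> by (rule sum_shifted_coeffs)
    ultimately show "cnj (coeff G j) * (\<Sum>k<2*n+1. cf F (int k - int (n - j)) * z ^ k)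
        = cnj (coeff G j) * (z ^ n * cnj z ^ j * poly F z)"
      by simp
  qed
  also have "\<dots> = z ^ n * poly F z * cnj (\<Sum>j<len G. coeff G j * z ^ j)"
    by (simp add: sum_distrib_left mult_ac)
  also have "(\<Sum>j<len G. coeff G j * z ^ j) = poly G z"
    by (intro poly_eq_sum_lessThan[symmetric]) (simp add: len_def)
  finally show ?thesis ..
qed

lemma sum_Ccorr_squares:
  "(\<Sum>s\<in>{- int (len F + len G)..int (len F + len G)}. (cmod (Ccorr F G s))\<^sup>2) = sqnorm (F * G)"
proof -
  define n where "n = len F + len G"
  define c where "c k = Ccorr F G (int k - int n)" for k
  have deg: "degree (F * G) < 2*n+1"
    using degree_mult_le[of F G] by (simp add: n_def len_def)
  have "pinner (F * G) (F * G) = root_mean (2*n+1) (\<lambda>z. poly (F * G) z * cnj (poly (F * G) z))"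
    by (rule pinner_eq_root_mean[OF deg deg])
  also have "\<dots> = root_mean (2*n+1) (\<lambda>z. (\<Sum>k<2*n+1. c k * z ^ k) * cnj (\<Sum>k<2*n+1. c k * z ^ k))"
  proof (rule root_mean_cong)
    fix z :: complex assume z: "cmod z = 1"
    have "(z ^ n * poly F z * cnj (poly G z)) * cnj (z ^ n * poly F z * cnj (poly G z))
        = (z ^ n * cnj (z ^ n)) * (poly (F * G) z * cnj (poly (F * G) z))"
      by (simp add: mult_ac)
    thus "poly (F * G) z * cnj (poly (F * G) z) = (\<Sum>k<2*n+1. c k * z ^ k) * cnj (\<Sum>k<2*n+1. c k * z ^ k)"
      unfolding c_def poly_mult_cnj_eq_Ccorr_sum[OF z n_def, symmetric]
      by (simp add: unit_power_mult_cnj[OF z])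
  qed simp
  also have "\<dots> = (\<Sum>k<2*n+1. c k * cnj (c k))"
    by (rule root_mean_parseval) simp
  also have "\<dots> = of_real (\<Sum>k<2*n+1. (cmod (c k))\<^sup>2)"
    by (simp add: complex_norm_square[symmetric])
  also have "(\<Sum>k<2*n+1. (cmod (c k))\<^sup>2) = (\<Sum>s\<in>{- int n..int n}. (cmod (Ccorr F G s))\<^sup>2)"
    unfolding c_def
    by (rule sum.reindex_bij_witness[where i="\<lambda>s. nat (s + int n)" and j="\<lambda>k. int k - int n"]) auto
  finally show ?thesis by (simp add: sqnorm_def n_def)
qed

lemma Ccorr_self_0: "Ccorr F F 0 = of_real (sqnorm F)"
proof -
  have "Ccorr F F 0 = (\<Sum>j<len F. coeff F j * cnj (coeff F j))"
    by (simp add: Ccorr_def cf_def)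
  also have "\<dots> = pinner F F"
    by (rule pinner_eq_sum_lessThan[symmetric]) (simp_all add: len_def)
  finally show ?thesis by (simp add: pinner_self)
qed

lemma CDF_eq_sqnorm: "CDF F G = sqnorm (F * G) / (sqnorm F * sqnorm G)"
  unfolding CDF_def sum_Ccorr_squares Ccorr_self_0 norm_of_real
  by (simp add: sqnorm_nonneg)

section \<open>Evolution of the norms under the step\<close>

definition cross_inner :: "complex poly \<Rightarrow> complex poly \<Rightarrow> real" where
  "cross_inner F G = Re (pinner (G * negz G) (F * negz F))"

lemma sqnorm_eq_root_mean:
  "degree p < K \<Longrightarrow> sqnorm p = Re (root_mean K (\<lambda>z. poly p z * cnj (poly p z)))"
  by (simp add: sqnorm_def pinner_eq_root_mean)

lemma root_mean_high_power:
  assumes "degree q < a" "a < K"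
  shows "root_mean K (\<lambda>z. z ^ a * cnj (poly q z)) = 0"
proof -
  have "pinner (monom 1 a) q = 0"
    unfolding pinner_def using assms(1) by (intro sum.neutral) (auto simp: coeff_monom coeff_eq_0)
  thus ?thesis
    using pinner_eq_root_mean[of "monom 1 a" K q] assms by (simp add: degree_monom_eq poly_monom)
qed

lemma step_sign_square:
  "\<sigma> \<in> {-1, 1} \<Longrightarrow> (of_int \<sigma> * (-1) ^ d :: complex) * (of_int \<sigma> * (-1) ^ d) = 1"
  by (auto simp flip: power_mult_distrib)

text \<open>In the following identities x, x', y, y' stand for F(z), F(-z), G(z), G(-z), w for z^(2d+1)
  and e for sigma (-1)^d: a step replaces x by x + e w cnj x' and x' by x' - e w cnj x.\<close>

lemma step_product_identity:
  fixes x x' y y' w e :: complex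
  assumes "e * e = 1" "cnj e = e" "w * cnj w = 1"
  shows "((x + e*w*cnj x') * (y + e*w*cnj y')) * cnj ((x + e*w*cnj x') * (y + e*w*cnj y'))
   = (x*y) * cnj (x*y) + (x*y') * cnj (x*y') + (x'*y) * cnj (x'*y) + (x'*y') * cnj (x'*y')
     + e * ((x*cnj x + x'*cnj x') * (w * cnj (y*y') + cnj w * (y*y')))
     + e * ((w * cnj (x*x') + cnj w * (x*x')) * (y*cnj y + y'*cnj y'))
     + w^2 * cnj (x*x'*(y*y')) + cnj (x*x') * (y*y') + (x*x') * cnj (y*y') + cnj w ^ 2 * (x*x'*(y*y'))"
  using assms by (simp add: algebra_simps) algebra

lemma step_product_negz_identity:
  fixes x x' y y' w e :: complex
  assumes "e * e = 1" "cnj e = e" "w * cnj w = 1"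
  shows "((x + e*w*cnj x') * (y' - e*w*cnj y)) * cnj ((x + e*w*cnj x') * (y' - e*w*cnj y))
   = (x*y) * cnj (x*y) + (x*y') * cnj (x*y') + (x'*y) * cnj (x'*y) + (x'*y') * cnj (x'*y')
     - e * ((x*cnj x + x'*cnj x') * (w * cnj (y*y') + cnj w * (y*y')))
     + e * ((w * cnj (x*x') + cnj w * (x*x')) * (y*cnj y + y'*cnj y'))
     - (w^2 * cnj (x*x'*(y*y')) + cnj (x*x') * (y*y') + (x*x') * cnj (y*y') + cnj w ^ 2 * (x*x'*(y*y')))"
  using assms by (simp add: algebra_simps) algebra

lemma step_cross_identity:
  fixes x x' y y' w e :: complex
  assumes "e * e = 1" "cnj e = e" "w * cnj w = 1"
  shows "((y + e*w*cnj y') * (y' - e*w*cnj y)) * cnj ((x + e*w*cnj x') * (x' - e*w*cnj x))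
   = (y*y') * cnj (x*x') + (x*x') * cnj (y*y') - cnj w ^ 2 * (x*x'*(y*y')) - w^2 * cnj (x*x'*(y*y'))
     + ((x*y) * cnj (x*y) - (x*y') * cnj (x*y') - (x'*y) * cnj (x'*y) + (x'*y') * cnj (x'*y'))
     + (e * cnj w * (y*y') * (x'*cnj x' - x*cnj x) - cnj (e * cnj w * (y*y') * (x'*cnj x' - x*cnj x)))
     + (e * w * cnj (x*x') * (y'*cnj y' - y*cnj y) - cnj (e * w * cnj (x*x') * (y'*cnj y' - y*cnj y)))"
  using assms by (simp add: algebra_simps) algebra

lemma step_norm_identity:
  fixes x x' w e :: complex
  assumes "e * e = 1" "cnj e = e" "w * cnj w = 1"
  shows "(x + e*w*cnj x') * cnj (x + e*w*cnj x')
   = x * cnj x + x' * cnj x' + e * (w * cnj (x*x') + cnj w * (x*x'))"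
  using assms by (simp add: algebra_simps)

lemma sqnorm_step:
  assumes "\<sigma> \<in> {-1, 1}"
  shows "sqnorm (step \<sigma> F) = 2 * sqnorm F"
proof -
  define d where "d = degree F"
  define K where "K = 2 * (2 * d + 2)"
  define e :: complex where "e = of_int \<sigma> * (-1) ^ d"
  define odd_part where "odd_part z = e * (z ^ (2*d+1) * cnj (poly F z * poly F (-z))
      + cnj (z ^ (2*d+1)) * (poly F z * poly F (-z)))" for z
  have "root_mean K (\<lambda>z. poly (step \<sigma> F) z * cnj (poly (step \<sigma> F) z))
      = root_mean K (\<lambda>z. poly F z * cnj (poly F z) + poly F (-z) * cnj (poly F (-z)) + odd_part z)"
  proof (rule root_mean_cong)
    fix z :: complex assume z: "cmod z = 1"
    have "z ^ (2*d+1) * cnj (z ^ (2*d+1)) = 1"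
      unfolding complex_cnj_power by (rule unit_power_mult_cnj[OF z])
    from step_norm_identity[OF step_sign_square[OF assms] _ this]
    show "poly (step \<sigma> F) z * cnj (poly (step \<sigma> F) z)
        = poly F z * cnj (poly F z) + poly F (-z) * cnj (poly F (-z)) + odd_part z"
      unfolding poly_step_on_circle[OF z d_def[symmetric]] odd_part_def e_def by simp
  qed (simp add: K_def)
  also have "\<dots> = 2 * root_mean K (\<lambda>z. poly F z * cnj (poly F z))"
  proof -
    have "root_mean K odd_part = 0"
      by (rule root_mean_odd) (simp_all add: K_def odd_part_def algebra_simps)
    moreover have "root_mean K (\<lambda>z. poly F (-z) * cnj (poly F (-z))) = root_mean K (\<lambda>z. poly F z * cnj (poly F z))"
      by (rule root_mean_reflect[of K "\<lambda>z. poly F z * cnj (poly F z)"]) (simp add: K_def)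
    ultimately show ?thesis by (simp add: root_mean_add)
  qed
  finally show ?thesis
    using degree_step_le[of \<sigma> F] by (simp add: sqnorm_eq_root_mean[of _ K] K_def d_def)
qed

context
  fixes F G :: "complex poly" and \<sigma> :: int and d :: nat
  assumes degree_F: "degree F = d" and degree_G: "degree G = d" and sign: "\<sigma> \<in> {-1, 1}"
begin

text \<open>K is even and exceeds every degree below (at most 4d + 2), so the means are exact.\<close>

private definition K :: nat where "K = 8 * (d + 1)"

private definition e :: complex where "e = of_int \<sigma> * (-1) ^ d"

private definition sq_FG :: "complex \<Rightarrow> complex" where
  "sq_FG z = poly (F * G) z * cnj (poly (F * G) z)"

private definition sq_FGm :: "complex \<Rightarrow> complex" where
  "sq_FGm z = poly (F * negz G) z * cnj (poly (F * negz G) z)"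

private definition cross :: "complex \<Rightarrow> complex" where
  "cross z = poly (G * negz G) z * cnj (poly (F * negz F) z)"

private definition top_term :: "complex \<Rightarrow> complex" where
  "top_term z = (z ^ (2*d+1))\<^sup>2 * cnj (poly F z * poly F (-z) * (poly G z * poly G (-z)))"

private definition mixed_F :: "complex \<Rightarrow> complex" where
  "mixed_F z = e * ((poly F z * cnj (poly F z) + poly F (-z) * cnj (poly F (-z))) *
      (z ^ (2*d+1) * cnj (poly G z * poly G (-z)) + cnj (z ^ (2*d+1)) * (poly G z * poly G (-z))))"

private definition mixed_G :: "complex \<Rightarrow> complex" where
  "mixed_G z = e * ((z ^ (2*d+1) * cnj (poly F z * poly F (-z)) + cnj (z ^ (2*d+1)) * (poly F z * poly F (-z))) *
      (poly G z * cnj (poly G z) + poly G (-z) * cnj (poly G (-z))))"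

private lemma K_even: "even K" and K_pos: "K > 0"
  by (simp_all add: K_def)

private lemma e_props: "e * e = 1" "cnj e = e"
  using step_sign_square[OF sign] by (simp_all add: e_def)

private lemma unit_w: "cmod z = 1 \<Longrightarrow> z ^ (2*d+1) * cnj (z ^ (2*d+1)) = 1"
  unfolding complex_cnj_power by (rule unit_power_mult_cnj)

private lemma poly_steps:
  assumes "cmod z = 1"
  shows "poly (step \<sigma> F) z = poly F z + e * z ^ (2*d+1) * cnj (poly F (- z))"
    and "poly (step \<sigma> G) z = poly G z + e * z ^ (2*d+1) * cnj (poly G (- z))"
    and "poly (step \<sigma> F) (- z) = poly F (- z) - e * z ^ (2*d+1) * cnj (poly F z)"
    and "poly (step \<sigma> G) (- z) = poly G (- z) - e * z ^ (2*d+1) * cnj (poly G z)"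
  using poly_step_on_circle[OF assms degree_F] poly_step_on_circle[OF assms degree_G]
    poly_step_on_circle_uminus[OF assms degree_F] poly_step_on_circle_uminus[OF assms degree_G]
  by (simp_all add: e_def)

private lemma degree_mult_lt_K:
  assumes "degree H \<le> 2*d+1" "degree H' \<le> 2*d+1"
  shows "degree (H * H') < K" "degree (H * negz H') < K"
  using degree_mult_le[of H H'] degree_mult_le[of H "negz H'"] assms by (auto simp: K_def)

private lemma degree_bounds:
  "degree (F * G) < K" "degree (F * negz G) < K" "degree (G * negz G) < K" "degree (F * negz F) < K"
  "degree (step \<sigma> F * step \<sigma> G) < K" "degree (step \<sigma> F * negz (step \<sigma> G)) < K"
  "degree (step \<sigma> G * negz (step \<sigma> G)) < K" "degree (step \<sigma> F * negz (step \<sigma> F)) < K"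
proof -
  have "degree F \<le> 2*d+1" "degree G \<le> 2*d+1" "degree (step \<sigma> F) \<le> 2*d+1" "degree (step \<sigma> G) \<le> 2*d+1"
    using degree_step_le[of \<sigma> F] degree_step_le[of \<sigma> G] degree_F degree_G by simp_all
  thus "degree (F * G) < K" "degree (F * negz G) < K" "degree (G * negz G) < K" "degree (F * negz F) < K"
    "degree (step \<sigma> F * step \<sigma> G) < K" "degree (step \<sigma> F * negz (step \<sigma> G)) < K"
    "degree (step \<sigma> G * negz (step \<sigma> G)) < K" "degree (step \<sigma> F * negz (step \<sigma> F)) < K"
    by (simp_all add: degree_mult_lt_K)
qed

private lemma root_mean_terms:
  "Re (root_mean K sq_FG) = sqnorm (F * G)"
  "Re (root_mean K sq_FGm) = sqnorm (F * negz G)"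
  "Re (root_mean K cross) = cross_inner F G"
  unfolding sq_FG_def sq_FGm_def cross_def cross_inner_def
  by (simp_all only: sqnorm_eq_root_mean[OF degree_bounds(1)] sqnorm_eq_root_mean[OF degree_bounds(2)]
      pinner_eq_root_mean[OF degree_bounds(3,4)])

private lemma root_mean_reflected_terms:
  "root_mean K (\<lambda>z. sq_FG (- z)) = root_mean K sq_FG"
  "root_mean K (\<lambda>z. sq_FGm (- z)) = root_mean K sq_FGm"
  by (rule root_mean_reflect[OF K_even])+

private lemma root_mean_vanishing:
  "root_mean K top_term = 0" "root_mean K mixed_F = 0" "root_mean K mixed_G = 0"
proof -
  have "degree (F * negz F * (G * negz G)) < 4*d+2"
    using degree_mult_le[of "F * negz F" "G * negz G"] degree_mult_le[of F "negz F"]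
      degree_mult_le[of G "negz G"] degree_F degree_G by simp
  moreover have "top_term = (\<lambda>z. z ^ ((2*d+1)*2) * cnj (poly (F * negz F * (G * negz G)) z))"
    by (rule ext) (simp only: top_term_def power_mult poly_mult poly_negz)
  ultimately show "root_mean K top_term = 0"
    by (simp only:) (rule root_mean_high_power; simp add: K_def)
  show "root_mean K mixed_F = 0" "root_mean K mixed_G = 0"
    by (rule root_mean_odd[OF K_even], simp add: mixed_F_def mixed_G_def algebra_simps)+
qed

lemma sqnorm_step_mult:
  "sqnorm (step \<sigma> F * step \<sigma> G) = 2 * sqnorm (F * G) + 2 * sqnorm (F * negz G) + 2 * cross_inner F G"
proof -
  have "root_mean K (\<lambda>z. poly (step \<sigma> F * step \<sigma> G) z * cnj (poly (step \<sigma> F * step \<sigma> G) z))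
      = root_mean K (\<lambda>z. sq_FG z + sq_FGm z + sq_FGm (- z) + sq_FG (- z) + mixed_F z + mixed_G z
          + top_term z + cross z + cnj (cross z) + cnj (top_term z))"
  proof (rule root_mean_cong[OF K_pos])
    fix z :: complex assume z: "cmod z = 1"
    show "poly (step \<sigma> F * step \<sigma> G) z * cnj (poly (step \<sigma> F * step \<sigma> G) z)
        = sq_FG z + sq_FGm z + sq_FGm (- z) + sq_FG (- z) + mixed_F z + mixed_G z
          + top_term z + cross z + cnj (cross z) + cnj (top_term z)"
      unfolding poly_mult poly_steps[OF z] step_product_identity[OF e_props unit_w[OF z]]
      by (simp add: sq_FG_def sq_FGm_def mixed_F_def mixed_G_def top_term_def cross_def)
  qed
  moreover note sqnorm_eq_root_mean[OF degree_bounds(5)]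
  ultimately show ?thesis
    by (simp add: root_mean_add root_mean_cnj root_mean_terms root_mean_reflected_terms root_mean_vanishing)
qed

lemma sqnorm_step_mult_negz:
  "sqnorm (step \<sigma> F * negz (step \<sigma> G)) = 2 * sqnorm (F * G) + 2 * sqnorm (F * negz G) - 2 * cross_inner F G"
proof -
  have "root_mean K (\<lambda>z. poly (step \<sigma> F * negz (step \<sigma> G)) z * cnj (poly (step \<sigma> F * negz (step \<sigma> G)) z))
      = root_mean K (\<lambda>z. sq_FG z + sq_FGm z + sq_FGm (- z) + sq_FG (- z) - mixed_F z + mixed_G z
          - (top_term z + cross z + cnj (cross z) + cnj (top_term z)))"
  proof (rule root_mean_cong[OF K_pos])
    fix z :: complex assume z: "cmod z = 1"
    show "poly (step \<sigma> F * negz (step \<sigma> G)) z * cnj (poly (step \<sigma> F * negz (step \<sigma> G)) z)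
        = sq_FG z + sq_FGm z + sq_FGm (- z) + sq_FG (- z) - mixed_F z + mixed_G z
          - (top_term z + cross z + cnj (cross z) + cnj (top_term z))"
      unfolding poly_mult poly_negz poly_steps[OF z] step_product_negz_identity[OF e_props unit_w[OF z]]
      by (simp add: sq_FG_def sq_FGm_def mixed_F_def mixed_G_def top_term_def cross_def)
  qed
  moreover note sqnorm_eq_root_mean[OF degree_bounds(6)]
  ultimately show ?thesis
    by (simp add: root_mean_add root_mean_diff root_mean_cnj root_mean_terms root_mean_reflected_terms root_mean_vanishing)
qed

lemma cross_inner_step:
  "cross_inner (step \<sigma> F) (step \<sigma> G) = 2 * sqnorm (F * G) - 2 * sqnorm (F * negz G) + 2 * cross_inner F G"
proof -
  define u_F where "u_F z = e * cnj (z ^ (2*d+1)) * (poly G z * poly G (-z))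
      * (poly F (-z) * cnj (poly F (-z)) - poly F z * cnj (poly F z))" for z
  define u_G where "u_G z = e * z ^ (2*d+1) * cnj (poly F z * poly F (-z))
      * (poly G (-z) * cnj (poly G (-z)) - poly G z * cnj (poly G z))" for z
  define imaginary where "imaginary z = u_F z - cnj (u_F z) + (u_G z - cnj (u_G z))" for z
  have "root_mean K (\<lambda>z. poly (step \<sigma> G * negz (step \<sigma> G)) z * cnj (poly (step \<sigma> F * negz (step \<sigma> F)) z))
      = root_mean K (\<lambda>z. cross z + cnj (cross z) - cnj (top_term z) - top_term z
          + (sq_FG z - sq_FGm z - sq_FGm (- z) + sq_FG (- z)) + imaginary z)"
  proof (rule root_mean_cong[OF K_pos])
    fix z :: complex assume z: "cmod z = 1"
    show "poly (step \<sigma> G * negz (step \<sigma> G)) z * cnj (poly (step \<sigma> F * negz (step \<sigma> F)) z)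
        = cross z + cnj (cross z) - cnj (top_term z) - top_term z
          + (sq_FG z - sq_FGm z - sq_FGm (- z) + sq_FG (- z)) + imaginary z"
      unfolding poly_mult poly_negz poly_steps[OF z] step_cross_identity[OF e_props unit_w[OF z]]
      by (simp add: sq_FG_def sq_FGm_def top_term_def cross_def imaginary_def u_F_def u_G_def)
  qed
  moreover have "Re (root_mean K imaginary) = 0"
    by (rule Re_root_mean_eq_0[OF K_pos]) (simp add: imaginary_def)
  moreover have "cross_inner (step \<sigma> F) (step \<sigma> G)
      = Re (root_mean K (\<lambda>z. poly (step \<sigma> G * negz (step \<sigma> G)) z * cnj (poly (step \<sigma> F * negz (step \<sigma> F)) z)))"
    unfolding cross_inner_def by (simp only: pinner_eq_root_mean[OF degree_bounds(7,8)])
  ultimately show ?thesis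
    by (simp add: root_mean_add root_mean_diff root_mean_cnj root_mean_terms root_mean_reflected_terms root_mean_vanishing)
qed

end

section \<open>Limits and their invariance under the group\<close>

lemma linear_recurrence_limit:
  fixes N M R :: "nat \<Rightarrow> real"
  assumes "\<And>m. N (Suc m) = 2 * N m + 2 * M m + 2 * R m"
    and "\<And>m. M (Suc m) = 2 * N m + 2 * M m - 2 * R m"
    and "\<And>m. R (Suc m) = 2 * N m - 2 * M m + 2 * R m"
  shows "(\<lambda>m. N m / 4 ^ m) \<longlonglongrightarrow> (2 * N 0 + M 0 + R 0) / 3"
proof -
  define a where "a = (2 * N 0 + M 0 + R 0) / 3"
  define b where "b = (N 0 - M 0 - R 0) / 3"
  have "N m = 4 ^ m * a + (-2) ^ m * b
      \<and> M m = 4 ^ m * (N 0 + 2 * M 0 - R 0) / 3 - (-2) ^ m * b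
      \<and> R m = 4 ^ m * (N 0 - M 0 + 2 * R 0) / 3 - (-2) ^ m * b" for m
    by (induction m) (simp_all add: assms a_def b_def field_simps)
  hence "N m / 4 ^ m = a + (-1/2) ^ m * b" for m
    by (simp add: field_simps flip: power_mult_distrib)
  moreover have "(\<lambda>m. a + (-1/2::real) ^ m * b) \<longlonglongrightarrow> a + 0 * b"
    by (intro tendsto_intros LIMSEQ_power_zero) simp
  ultimately show ?thesis by (simp add: a_def)
qed

definition cdf_limit :: "complex poly \<Rightarrow> complex poly \<Rightarrow> real" where
  "cdf_limit F G = (2 * sqnorm (F * G) + sqnorm (F * negz G) + cross_inner F G) / (3 * sqnorm F * sqnorm G)"

definition psc_limit :: "complex poly \<Rightarrow> complex poly \<Rightarrow> real" where
  "psc_limit F G = sqrt ((cdf_limit F F - 1) * (cdf_limit G G - 1)) + cdf_limit F G"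

lemma step_iterate_in_Pl:
  assumes "F 0 \<in> Pl l" "\<And>m. \<sigma> m \<in> {-1, 1}" "\<And>m. F (Suc m) = step (\<sigma> m) (F m)"
  shows "F m \<in> Pl (2 ^ m * l)"
proof (induction m)
  case (Suc m)
  thus ?case using step_in_Pl[OF Suc assms(2)[of m]] assms(3)[of m] by (simp add: mult.assoc)
qed (use assms in simp)

lemma CDF_step_tendsto:
  assumes "F 0 \<in> Pl l" "G 0 \<in> Pl l" and \<sigma>: "\<And>m. \<sigma> m \<in> {-1, 1}"
    and F: "\<And>m. F (Suc m) = step (\<sigma> m) (F m)" and G: "\<And>m. G (Suc m) = step (\<sigma> m) (G m)"
  shows "(\<lambda>m. CDF (F m) (G m)) \<longlonglongrightarrow> cdf_limit (F 0) (G 0)"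
proof -
  define N where "N m = sqnorm (F m * G m)" for m
  define M where "M m = sqnorm (F m * negz (G m))" for m
  define R where "R m = cross_inner (F m) (G m)" for m
  have deg: "degree (F m) = degree (G m)" for m
    using step_iterate_in_Pl[OF assms(1) \<sigma> F, of m] step_iterate_in_Pl[OF assms(2) \<sigma> G, of m]
    by (simp add: Pl_def len_def)
  have lim: "(\<lambda>m. N m / 4 ^ m) \<longlonglongrightarrow> (2 * N 0 + M 0 + R 0) / 3"
    by (rule linear_recurrence_limit)
      (simp_all only: N_def M_def R_def F G sqnorm_step_mult[OF deg refl \<sigma>]
        sqnorm_step_mult_negz[OF deg refl \<sigma>] cross_inner_step[OF deg refl \<sigma>])
  define D where "D = sqnorm (F 0) * sqnorm (G 0)"
  have sqnorm_iterate: "sqnorm (H m) = 2 ^ m * sqnorm (H 0)"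
    if "\<And>m. H (Suc m) = step (\<sigma> m) (H m)" for H m
    by (induction m) (simp_all add: that sqnorm_step[OF \<sigma>])
  have "CDF (F m) (G m) = N m / 4 ^ m / D" for m
  proof -
    have "CDF (F m) (G m) = N m / ((2 ^ m * 2 ^ m) * D)"
      unfolding CDF_eq_sqnorm N_def D_def sqnorm_iterate[OF F, of m] sqnorm_iterate[OF G, of m]
      by (simp add: mult_ac)
    also have "(2 ^ m * 2 ^ m :: real) = 4 ^ m"
      by (simp flip: power_mult_distrib)
    finally show ?thesis by (simp add: divide_divide_eq_left)
  qed
  moreover have "cdf_limit (F 0) (G 0) = (2 * N 0 + M 0 + R 0) / 3 / D"
    unfolding cdf_limit_def N_def M_def R_def D_def by (simp only: divide_divide_eq_left mult.assoc)
  ultimately show ?thesis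
    using tendsto_mult_right[OF lim, of "inverse D"] by (simp only: divide_inverse)
qed

lemma PSC_step_tendsto:
  assumes "F 0 \<in> Pl l" "G 0 \<in> Pl l" and "\<And>m. \<sigma> m \<in> {-1, 1}"
    and "\<And>m. F (Suc m) = step (\<sigma> m) (F m)" and "\<And>m. G (Suc m) = step (\<sigma> m) (G m)"
  shows "(\<lambda>m. PSC (F m) (G m)) \<longlonglongrightarrow> psc_limit (F 0) (G 0)"
  unfolding PSC_def ADF_def psc_limit_def
  by (intro tendsto_intros CDF_step_tendsto[of F l G \<sigma>] CDF_step_tendsto[of F l F \<sigma>]
      CDF_step_tendsto[of G l G \<sigma>] assms)

lemma cdf_limit_commute: "cdf_limit G F = cdf_limit F G"
proof -
  have "sqnorm (G * negz F) = sqnorm (F * negz G)"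
    using sqnorm_negz[of "G * negz F"] by (simp add: negz_mult mult.commute)
  moreover have "cross_inner G F = cross_inner F G"
    unfolding cross_inner_def by (subst pinner_commute) simp
  ultimately show ?thesis by (simp add: cdf_limit_def mult.commute)
qed

lemma cdf_limit_uminus_left: "cdf_limit (- F) G = cdf_limit F G"
  by (simp add: cdf_limit_def cross_inner_def negz_uminus)

lemma cdf_limit_uminus_right: "cdf_limit F (- G) = cdf_limit F G"
  by (metis cdf_limit_commute cdf_limit_uminus_left)

lemma cdf_limit_negz: "cdf_limit (negz F) (negz G) = cdf_limit F G"
proof -
  have "negz F * negz G = negz (F * G)" "negz F * G = negz (F * negz G)"
    "negz G * G = negz (G * negz G)" "negz F * F = negz (F * negz F)"
    by (simp_all add: negz_mult mult.commute)
  thus ?thesis by (simp add: cdf_limit_def cross_inner_def pinner_negz)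
qed

lemma cdf_limit_dagger:
  assumes "degree F = degree G"
  shows "cdf_limit (dagger F) (dagger G) = cdf_limit F G"
proof -
  have norms: "sqnorm (dagger F * dagger G) = sqnorm (F * G)"
    "sqnorm (dagger F * negz (dagger G)) = sqnorm (F * negz G)" "sqnorm (dagger H) = sqnorm H" for H
    by (intro sqnorm_cong_on_circle; simp add: norm_mult norm_poly_dagger_on_circle)+
  have "pinner (dagger G * negz (dagger G)) (dagger F * negz (dagger F)) = pinner (F * negz F) (G * negz G)"
  proof (rule pinner_cong_on_circle)
    fix z :: complex assume z: "cmod z = 1"
    define c where "c = z ^ degree G * (- z) ^ degree G"
    have "cmod c = 1" using z by (simp add: c_def norm_mult norm_power)
    hence "c * cnj c = 1" using complex_norm_square[of c] by simp
    moreover have "poly (dagger G * negz (dagger G)) z * cnj (poly (dagger F * negz (dagger F)) z)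
        = (c * cnj c) * (poly (F * negz F) z * cnj (poly (G * negz G) z))"
      using z assms by (simp add: c_def poly_dagger_on_circle mult_ac)
    ultimately show "poly (dagger G * negz (dagger G)) z * cnj (poly (dagger F * negz (dagger F)) z)
        = poly (F * negz F) z * cnj (poly (G * negz G) z)"
      by simp
  qed
  hence "cross_inner (dagger F) (dagger G) = cross_inner F G"
    unfolding cross_inner_def by (subst (2) pinner_commute) simp
  thus ?thesis by (simp add: cdf_limit_def norms)
qed

lemma Pl_uminus: "F \<in> Pl l \<Longrightarrow> - F \<in> Pl l"
  and Pl_negz: "F \<in> Pl l \<Longrightarrow> negz F \<in> Pl l"
  and Pl_dagger: "F \<in> Pl l \<Longrightarrow> dagger F \<in> Pl l"
  by (auto simp: Pl_def len_def degree_dagger coeff_0_dagger coeff_0_negz)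

lemma psc_limit_commute: "psc_limit G F = psc_limit F G"
  unfolding psc_limit_def by (simp add: cdf_limit_commute[of F G] mult.commute)

lemma Gll_generator_invariant:
  assumes "p \<in> Pl l \<times> Pl l" and "g \<in> {gs, gn, gh, gr}"
  shows "g p \<in> Pl l \<times> Pl l \<and> case_prod cdf_limit (g p) = case_prod cdf_limit p
    \<and> case_prod psc_limit (g p) = case_prod psc_limit p"
proof -
  obtain F G where p: "p = (F, G)" and F: "F \<in> Pl l" and G: "G \<in> Pl l"
    using assms(1) by auto
  have deg: "degree F = degree G"
    using F G by (simp add: Pl_def len_def)
  consider "g = gs" | "g = gn" | "g = gh" | "g = gr"
    using assms(2) by blast
  thus ?thesis
  proof cases
    case 1 thus ?thesis
      using F G by (simp add: p gs_def psc_limit_commute cdf_limit_commute[of F G])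
  next
    case 2 thus ?thesis
      using F G by (simp add: p gn_def psc_limit_def cdf_limit_uminus_left cdf_limit_uminus_right Pl_uminus)
  next
    case 3 thus ?thesis
      using F G by (simp add: p gh_def psc_limit_def cdf_limit_negz Pl_negz)
  next
    case 4 thus ?thesis
      using F G deg by (simp add: p gr_def psc_limit_def cdf_limit_dagger Pl_dagger)
  qed
qed

lemma Gll_invariant:
  assumes "t \<in> Gll" and "p \<in> Pl l \<times> Pl l"
  shows "t p \<in> Pl l \<times> Pl l \<and> case_prod cdf_limit (t p) = case_prod cdf_limit p
    \<and> case_prod psc_limit (t p) = case_prod psc_limit p"
  using assms
proof (induction arbitrary: p rule: Gll.induct)
  case (Gll_s t) thus ?case using Gll_generator_invariant[of "t p" l gs] by auto
next
  case (Gll_n t) thus ?case using Gll_generator_invariant[of "t p" l gn] by auto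
next
  case (Gll_h t) thus ?case using Gll_generator_invariant[of "t p" l gh] by auto
next
  case (Gll_r t) thus ?case using Gll_generator_invariant[of "t p" l gr] by auto
qed simp

theorem corollary3p5:
  fixes l :: nat and f g a b :: "nat \<Rightarrow> complex poly" and \<sigma> :: "nat \<Rightarrow> int"
    and t :: "complex poly \<times> complex poly \<Rightarrow> complex poly \<times> complex poly"
  assumes "f 0 \<in> Pl l" and "g 0 \<in> Pl l"
    and "t \<in> Gll"
    and "(a 0, b 0) = t (f 0, g 0)"
    and "\<And>m. \<sigma> m \<in> {-1, 1}"
    and "\<And>m. f (Suc m) = step (\<sigma> m) (f m)"
    and "\<And>m. g (Suc m) = step (\<sigma> m) (g m)"
    and "\<And>m. a (Suc m) = step (\<sigma> m) (a m)"
    and "\<And>m. b (Suc m) = step (\<sigma> m) (b m)"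
  shows "(\<exists>L. (\<lambda>m. CDF (a m) (b m)) \<longlonglongrightarrow> L \<and> (\<lambda>m. CDF (f m) (g m)) \<longlonglongrightarrow> L)
       \<and> (\<exists>L. (\<lambda>m. PSC (a m) (b m)) \<longlonglongrightarrow> L \<and> (\<lambda>m. PSC (f m) (g m)) \<longlonglongrightarrow> L)"
proof -
  have ab: "a 0 \<in> Pl l" "b 0 \<in> Pl l"
    and cdf: "cdf_limit (a 0) (b 0) = cdf_limit (f 0) (g 0)"
    and psc: "psc_limit (a 0) (b 0) = psc_limit (f 0) (g 0)"
    using Gll_invariant[OF assms(3), of "(f 0, g 0)" l] assms(1,2) unfolding assms(4)[symmetric] by auto
  show ?thesis
  proof (intro conjI exI)
    show "(\<lambda>m. CDF (a m) (b m)) \<longlonglongrightarrow> cdf_limit (f 0) (g 0)"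
      using CDF_step_tendsto[OF ab assms(5,8,9)] unfolding cdf .
    show "(\<lambda>m. CDF (f m) (g m)) \<longlonglongrightarrow> cdf_limit (f 0) (g 0)"
      by (rule CDF_step_tendsto[OF assms(1,2,5,6,7)])
    show "(\<lambda>m. PSC (a m) (b m)) \<longlonglongrightarrow> psc_limit (f 0) (g 0)"
      using PSC_step_tendsto[OF ab assms(5,8,9)] unfolding psc .
    show "(\<lambda>m. PSC (f m) (g m)) \<longlonglongrightarrow> psc_limit (f 0) (g 0)"
      by (rule PSC_step_tendsto[OF assms(1,2,5,6,7)])
  qed
qed

end
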